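(* There do not exist a finite set $H$ and functions $f:H\times\Sigma\to H$ and $o:H\times\Sigma\to\{1,-1\}$ such that every word of $\mathcal{L}$ is of the form $\mathrm{out}(x,\sigma)$ for some $x\in H$ and some $\sigma\in\Sigma^*$. Here, for $x\in H$ and $\sigma=s_1\cdots s_m\in\Sigma^*$, we set $h_0=x$, $h_i=f(h_{i-1},s_i)$, and $\mathrm{out}(x,\sigma)=t_1\cdots t_m\in\tilde\Sigma^*$, where $t_i=s_i$ if $o(h_{i-1},s_i)=1$ and $t_i=\tilde s_i$ if $o(h_{i-1},s_i)=-1$. (That is, a deterministic hidden-variable model with finitely many hidden states cannot account for all possible outcome sequences of the experiment.)
   Context: Let $\Sigma=\{A,B,C,a,b,c,\alpha,\beta,\gamma\}$ be nine observables arranged in a $3\times 3$ square with rows $(A,B,C)$, $(a,b,c)$, $(\alpha,\beta,\gamma)$. The six \emph{contexts} are the three rows $\{A,B,C\},\{a,b,c\},\{\alpha,\beta,\gamma\}$ and the three columns $\{A,a,\alpha\},\{B,b,\beta\},\{C,c,\gamma\}$. Each context has a sign: $-1$ for $\{C,c,\gamma\}$ and $+1$ for the other five. Two distinct observables are \emph{compatible} if they lie in a common context, and \emph{incompatible} otherwise. Let $\tilde\Sigma=\{X,\tilde X: X\in\Sigma\}$ (18 letters); the letter $X$ means "observable $X$ measured with value $1$" and $\tilde X$ means "$X$ measured with value $-1$". For a word $w=t_1\cdots t_m\in\tilde\Sigma^*$ define inductively partial assignments $v_0,\dots,v_m:\Sigma\rightharpoonup\{1,-1\}$ (an observable in $\mathrm{dom}(v_i)$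 is \emph{determined} after step $i$, with value $v_i(X)$), and whether $w$ is consistent: $v_0$ is the empty assignment. Given $v_{i-1}$, let $t_i$ record observable $X$ with value $\varepsilon$. If $X\in\mathrm{dom}(v_{i-1})$ and $v_{i-1}(X)\ne\varepsilon$, then $w$ is \emph{inconsistent}. Otherwise let $u$ be the restriction of $v_{i-1}$ to observables that are equal to or compatible with $X$, extended by $u(X)=\varepsilon$; then $v_i$ is obtained from $u$ by repeatedly doing the following until nothing changes: whenever a context has exactly two of its observables in the domain, assign the third observable the value making the product of the three values equal to the sign of that context. The word $w$ is \emph{consistent} if no step is inconsistent; $\mathcal{L}$ is the set of consistent words (it contains the empty word). *)

theory Defs
  imports Main
begin

datatype obs = A | B | C | a | b | c | al | be | ga

text \<open>Letters of the extended alphabet: Lt X means X measured with value 1,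
  Ltil X means X measured with value -1.\<close>
datatype letter = Lt obs | Ltil obs

definition contexts :: "(obs list \<times> int) list" where
  "contexts = [([A,B,C], 1), ([a,b,c], 1), ([al,be,ga], 1),
               ([A,a,al], 1), ([B,b,be], 1), ([C,c,ga], -1)]"

definition compatible :: "obs \<Rightarrow> obs \<Rightarrow> bool" where
  "compatible X Y \<longleftrightarrow> X \<noteq> Y \<and> (\<exists>(K,s)\<in>set contexts. X \<in> set K \<and> Y \<in> set K)"

fun letter_obs :: "letter \<Rightarrow> obs" where
  "letter_obs (Lt X) = X" | "letter_obs (Ltil X) = X"

fun letter_val :: "letter \<Rightarrow> int" where
  "letter_val (Lt X) = 1" | "letter_val (Ltil X) = -1"

type_synonym assignment = "obs \<Rightarrow> int option"

fun ctx_applicable :: "assignment \<Rightarrow> obs list \<times> int \<Rightarrow> bool" where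
  "ctx_applicable v ([X,Y,Z], s) = (card {W \<in> {X,Y,Z}. v W \<noteq> None} = 2)"
| "ctx_applicable v _ = False"

fun ctx_apply :: "assignment \<Rightarrow> obs list \<times> int \<Rightarrow> assignment" where
  "ctx_apply v ([X,Y,Z], s) =
     (if v X = None then v(X \<mapsto> s * the (v Y) * the (v Z))
      else if v Y = None then v(Y \<mapsto> s * the (v X) * the (v Z))
      else v(Z \<mapsto> s * the (v X) * the (v Y)))"
| "ctx_apply v _ = v"

definition prop_step :: "assignment \<Rightarrow> assignment" where
  "prop_step v = (case filter (ctx_applicable v) contexts of
                    [] \<Rightarrow> v | k # _ \<Rightarrow> ctx_apply v k)"

text \<open>Each effective step determines a new observable, so after 9 steps nothing changes.\<close>
definition propagate :: "assignment \<Rightarrow> assignment" where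
  "propagate v = (prop_step ^^ 9) v"

text \<open>Processing one letter: None signals inconsistency.\<close>
definition update :: "assignment \<Rightarrow> letter \<Rightarrow> assignment option" where
  "update v t = (let X = letter_obs t; e = letter_val t in
     if v X \<noteq> None \<and> v X \<noteq> Some e then None
     else Some (propagate ((\<lambda>Y. if Y = X \<or> compatible X Y then v Y else None)(X \<mapsto> e))))"

fun run :: "assignment \<Rightarrow> letter list \<Rightarrow> assignment option" where
  "run v [] = Some v"
| "run v (t # w) = (case update v t of None \<Rightarrow> None | Some v' \<Rightarrow> run v' w)"

definition consistent_lang :: "letter list set" where
  "consistent_lang = {w. run Map.empty w \<noteq> None}"

fun out :: "('h \<Rightarrow> obs \<Rightarrow> 'h) \<Rightarrow> ('h \<Rightarrow> obs \<Rightarrow> int) \<Rightarrow> 'h \<Rightarrow> obs list \<Rightarrow> letter list" where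
  "out f oo x [] = []"
| "out f oo x (s # \<sigma>) = (if oo x s = 1 then Lt s else Ltil s) # out f oo (f x s) \<sigma>"

end

theory Submission
  imports Defs
begin

text \<open>Measuring \<open>A\<close> and \<open>b\<close> alternately never leads to an inconsistency: the two observables
  are incompatible, so each measurement forgets the previous value. Hence for every \<open>n\<close> all
  \<open>2 ^ n\<close> words over the observable sequence \<open>(A b)^n\<close> with arbitrary outcomes for \<open>A\<close> are
  consistent. A deterministic model, however, produces at most one output word per hidden state
  for a fixed observable sequence, so it needs at least \<open>2 ^ n\<close> hidden states for every \<open>n\<close>.\<close>

lemma letter_obs_out: "map letter_obs (out f oo x \<sigma>) = \<sigma>"
  by (induction \<sigma> arbitrary: x) auto

lemma card_covered_words_le:
  assumes "finite H"
    and covered: "\<forall>w\<in>W. \<exists>x\<in>H. \<exists>\<sigma>. w = out f oo x \<sigma>"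
    and same_obs: "\<forall>w\<in>W. map letter_obs w = \<sigma>"
  shows "card W \<le> card H"
proof -
  have "W \<subseteq> (\<lambda>x. out f oo x \<sigma>) ` H"
  proof
    fix w assume "w \<in> W"
    then obtain x \<sigma>' where "x \<in> H" "w = out f oo x \<sigma>'"
      using covered by blast
    moreover have "\<sigma>' = \<sigma>"
      using same_obs \<open>w \<in> W\<close> \<open>w = out f oo x \<sigma>'\<close> letter_obs_out by metis
    ultimately show "w \<in> (\<lambda>x. out f oo x \<sigma>) ` H"
      by blast
  qed
  then have "card W \<le> card ((\<lambda>x. out f oo x \<sigma>) ` H)"
    using \<open>finite H\<close> by (intro card_mono) auto
  also have "\<dots> \<le> card H"
    using \<open>finite H\<close> by (rule card_image_le)
  finally show ?thesis .
qed

lemma funpow_fixed_point: "g v = v \<Longrightarrow> (g ^^ n) v = v"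
  by (induction n) auto

lemma propagate_singleton: "propagate [X \<mapsto> e] = [X \<mapsto> e]"
proof -
  have "prop_step [X \<mapsto> e] = [X \<mapsto> e]"
    unfolding prop_step_def contexts_def
    by (cases X) (simp_all add: Collect_conv_if insert_Collect)
  then show ?thesis
    unfolding propagate_def by (rule funpow_fixed_point)
qed

lemma update_forgetting:
  assumes "v (letter_obs t) = None"
    and "\<forall>Y. v Y \<noteq> None \<longrightarrow> \<not> compatible (letter_obs t) Y"
  shows "update v t = Some [letter_obs t \<mapsto> letter_val t]"
proof -
  have "(\<lambda>Y. if Y = letter_obs t \<or> compatible (letter_obs t) Y then v Y else None)
          (letter_obs t \<mapsto> letter_val t) = [letter_obs t \<mapsto> letter_val t]"
    using assms by (auto simp: fun_eq_iff)
  then show ?thesis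
    using assms(1) by (simp add: update_def propagate_singleton)
qed

lemma not_compatible_A_b: "\<not> compatible A b" "\<not> compatible b A"
  unfolding compatible_def contexts_def by auto

definition alternating_word :: "bool list \<Rightarrow> letter list" where
  "alternating_word bs = concat (map (\<lambda>\<beta>. [if \<beta> then Lt A else Ltil A, Lt b]) bs)"

lemma alternating_word_Nil [simp]: "alternating_word [] = []"
  and alternating_word_Cons [simp]:
    "alternating_word (\<beta> # bs) = (if \<beta> then Lt A else Ltil A) # Lt b # alternating_word bs"
  by (simp_all add: alternating_word_def)

lemma inj_alternating_word: "inj alternating_word"
proof (rule injI)
  show "alternating_word bs = alternating_word cs \<Longrightarrow> bs = cs" for bs cs
    by (induction bs arbitrary: cs; case_tac cs) (auto split: if_splits)
qed

lemma letter_obs_alternating_word: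
  "map letter_obs (alternating_word bs) = concat (replicate (length bs) [A, b])"
  by (induction bs) auto

lemma run_alternating_word:
  "v = Map.empty \<or> v = [b \<mapsto> 1] \<Longrightarrow> run v (alternating_word bs) \<noteq> None"
proof (induction bs arbitrary: v)
  case Nil
  then show ?case by simp
next
  case (Cons \<beta> bs)
  let ?t = "if \<beta> then Lt A else Ltil A"
  have "update v ?t = Some [A \<mapsto> letter_val ?t]"
    using update_forgetting[of v ?t] Cons.prems not_compatible_A_b by auto
  moreover have "update [A \<mapsto> letter_val ?t] (Lt b) = Some [b \<mapsto> 1]"
    using update_forgetting[of _ "Lt b"] not_compatible_A_b by auto
  ultimately show ?case
    using Cons.IH by simp
qed

lemma alternating_word_consistent: "alternating_word bs \<in> consistent_lang"
  using run_alternating_word[of Map.empty] by (simp add: consistent_lang_def)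

theorem mainTheorem5:
  "\<not> (\<exists>(H :: 'h set) (f :: 'h \<Rightarrow> obs \<Rightarrow> 'h) (oo :: 'h \<Rightarrow> obs \<Rightarrow> int).
        finite H \<and> (\<forall>x\<in>H. \<forall>s. f x s \<in> H) \<and> (\<forall>x\<in>H. \<forall>s. oo x s \<in> {1, -1}) \<and>
        (\<forall>w\<in>consistent_lang. \<exists>x\<in>H. \<exists>\<sigma>. w = out f oo x \<sigma>))"
proof
  assume "\<exists>(H :: 'h set) f oo. finite H \<and> (\<forall>x\<in>H. \<forall>s. f x s \<in> H) \<and>
    (\<forall>x\<in>H. \<forall>s. oo x s \<in> {1, -1}) \<and> (\<forall>w\<in>consistent_lang. \<exists>x\<in>H. \<exists>\<sigma>. w = out f oo x \<sigma>)"
  then obtain H :: "'h set" and f oo where "finite H"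
    and covered: "\<forall>w\<in>consistent_lang. \<exists>x\<in>H. \<exists>\<sigma>. w = out f oo x \<sigma>" by blast
  define n where "n = card H"
  define W where "W = alternating_word ` {bs. length bs = n}"
  have "card W = 2 ^ n"
    unfolding W_def card_image[OF inj_on_subset[OF inj_alternating_word subset_UNIV]]
    using card_lists_length_eq[of "UNIV :: bool set" n] by simp
  moreover have "card W \<le> card H"
  proof (rule card_covered_words_le[OF \<open>finite H\<close>])
    show "\<forall>w\<in>W. \<exists>x\<in>H. \<exists>\<sigma>. w = out f oo x \<sigma>"
      using covered alternating_word_consistent by (auto simp: W_def)
    show "\<forall>w\<in>W. map letter_obs w = concat (replicate n [A, b])"
      by (auto simp: W_def letter_obs_alternating_word)
  qed
  ultimately have "2 ^ n \<le> n"
    by (simp add: n_def)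
  then show False
    using less_exp[of n] by simp
qed

end
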